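(* Let $\Omega=\{(u,v)\in\mathbb R^2: 0<u<2^{1/3},\ v>0\}$ and let $I\ni t\mapsto(u(t),v(t))\in\Omega$ be the maximal solution of $$u'=\frac23\,\frac{2-u^3}{u^3v^3},\qquad v'=-\frac23\,\frac{1-2u^3}{u^4v^2},\qquad u(0)=v(0)=1.$$ Then this solution parametrizes the whole curve $v=1/\sqrt{u(2-u^3)}$, $0<u<2^{1/3}$; its existence interval is $I=(t_{min},+\infty)$ with $$t_{min}=-\frac32\int_0^1\frac{x^{3/2}}{(2-x^3)^{5/2}}\,dx,$$ and $\lim_{t\to t_{min}}u(t)=0$, $\lim_{t\to t_{min}}v(t)=+\infty$, $\lim_{t\to+\infty}u(t)=2^{1/3}$, $\lim_{t\to+\infty}v(t)=+\infty$. *)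

theory Defs
  imports "HOL-Analysis.Analysis"
begin

definition Omega :: "(real \<times> real) set" where
  "Omega = {(u, v). 0 < u \<and> u < root 3 2 \<and> 0 < v}"

definition Fu :: "real \<Rightarrow> real \<Rightarrow> real" where
  "Fu u v = (2/3) * (2 - u^3) / (u^3 * v^3)"

definition Fv :: "real \<Rightarrow> real \<Rightarrow> real" where
  "Fv u v = - (2/3) * (1 - 2 * u^3) / (u^4 * v^2)"

definition is_solution :: "real set \<Rightarrow> (real \<Rightarrow> real) \<Rightarrow> (real \<Rightarrow> real) \<Rightarrow> bool" where
  "is_solution I u v \<longleftrightarrow>
     open I \<and> is_interval I \<and> 0 \<in> I \<and> u 0 = 1 \<and> v 0 = 1 \<and>
     (\<forall>t\<in>I. (u t, v t) \<in> Omega \<and>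
        (u has_real_derivative Fu (u t) (v t)) (at t) \<and>
        (v has_real_derivative Fv (u t) (v t)) (at t))"

definition is_maximal_solution :: "real set \<Rightarrow> (real \<Rightarrow> real) \<Rightarrow> (real \<Rightarrow> real) \<Rightarrow> bool" where
  "is_maximal_solution I u v \<longleftrightarrow>
     is_solution I u v \<and>
     (\<forall>J u' v'. is_solution J u' v' \<and> I \<subseteq> J \<and> (\<forall>t\<in>I. u' t = u t \<and> v' t = v t) \<longrightarrow> J = I)"

definition t_min :: real where
  "t_min = - (3/2) * integral {0..1} (\<lambda>x::real. x powr (3/2) / (2 - x^3) powr (5/2))"

end

theory Submission
  imports Defs
begin

text \<open>The quantity \<open>v^2 u (2 - u^3)\<close> is a first integral of the system, so a solution
  through \<open>(1, 1)\<close> stays on the level curve \<open>v = 1 / sqrt (u (2 - u^3))\<close>. On that curve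
  \<open>u' = 2 / (3 phi u)\<close>, where \<open>phi x = x^(3/2) / (2 - x^3)^(5/2)\<close> is the integrand of
  \<open>t_min\<close>; hence \<open>t = T (u t)\<close> for the arrival time \<open>T x = t_min + (3/2) \<integral>\<^sub>0\<^sup>x phi\<close>, since \<open>T 1 = 0\<close>.
  \<open>T\<close> increases from \<open>T 0 = t_min\<close> to \<open>+\<infinity>\<close> as \<open>x \<rightarrow> 2^(1/3)\<close>, because \<open>phi\<close> dominates a
  multiple of the derivative of \<open>(2 - x^3)^(-3/2)\<close>. So \<open>T\<close> is a bijection onto
  \<open>(t_min, \<infinity>)\<close>; its inverse, completed by the curve, is the maximal solution, and the
  boundary behaviour follows because \<open>u (2 - u^3) \<rightarrow> 0\<close> at both ends.\<close>

lemma DERIV_inverse_sqrt: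
  assumes "(w has_real_derivative w') (at x)" "0 < w x"
  shows "((\<lambda>x. 1 / sqrt (w x)) has_real_derivative - w' / (2 * w x * sqrt (w x))) (at x)"
  using assms by (auto intro!: derivative_eq_intros simp: field_simps)

lemma filterlim_inverse_sqrt_at_top:
  fixes f :: "'a \<Rightarrow> real"
  assumes "(f \<longlongrightarrow> 0) F" "eventually (\<lambda>t. 0 < f t) F"
  shows "filterlim (\<lambda>t. 1 / sqrt (f t)) at_top F"
proof -
  have "filterlim f (at_right 0) F"
    using assms by (rule tendsto_imp_filterlim_at_right)
  from filterlim_compose[OF sqrt_at_top filterlim_compose[OF filterlim_inverse_at_top_right this]]
  show ?thesis unfolding inverse_eq_divide real_sqrt_divide real_sqrt_one .
qed

lemma DERIV_inverse_on_open:
  fixes f g :: "real \<Rightarrow> real"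
  assumes "open S" "x \<in> S"
    and "\<And>y. y \<in> S \<Longrightarrow> (f has_real_derivative f' y) (at y)"
    and "\<And>y. y \<in> S \<Longrightarrow> g (f y) = y" and "f' x \<noteq> 0"
  shows "(g has_real_derivative inverse (f' x)) (at (f x))"
  unfolding has_field_derivative_def
  by (rule has_derivative_inverse_on[where f'="\<lambda>y. (*) (f' y)"])
     (use assms in \<open>auto simp: has_field_derivative_def\<close>)

lemma DERIV_zero_imp_constant_on_interval:
  fixes f :: "real \<Rightarrow> real"
  assumes "is_interval J" "\<And>t. t \<in> J \<Longrightarrow> (f has_real_derivative 0) (at t)" "s \<in> J" "t \<in> J"
  shows "f t = f s"
proof -
  obtain c where "\<forall>t\<in>J. f t = c"
    using has_field_derivative_zero_constant[of J f] assms(1,2)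
    by (metis has_field_derivative_at_within is_interval_convex_1)
  then show ?thesis using assms(3,4) by simp
qed

lemma mono_on_onto_interval_tendsto_at_top:
  fixes g :: "real \<Rightarrow> real"
  assumes mono: "mono_on {c<..} g" and onto: "g ` {c<..} = {a<..<b}"
  shows "(g \<longlongrightarrow> b) at_top"
proof (rule order_tendstoI)
  have bounds: "a < g t" "g t < b" if "c < t" for t
    using that onto by auto
  {
    fix y assume "y < b"
    define m where "m = (max y a + b) / 2"
    have m: "m \<in> {a<..<b}" "y < m"
      using \<open>y < b\<close> bounds[of "c + 1"] unfolding m_def by auto
    obtain t0 where t0: "c < t0" "g t0 = m"
      using m(1) onto by (metis greaterThan_iff imageE)
    have "eventually (\<lambda>t. t0 \<le> t) at_top" by (rule eventually_ge_at_top)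
    then show "eventually (\<lambda>t. y < g t) at_top"
    proof eventually_elim
      case (elim t)
      with t0 mono_onD[OF mono, of t0 t] m(2) show ?case by auto
    qed
  next
    fix y assume "b < y"
    have "eventually (\<lambda>t. c < t) at_top" by (rule eventually_gt_at_top)
    then show "eventually (\<lambda>t. g t < y) at_top"
      by eventually_elim (use bounds(2) \<open>b < y\<close> in \<open>blast intro: less_trans\<close>)
  }
qed

lemma mono_on_onto_interval_tendsto_at_right:
  fixes g :: "real \<Rightarrow> real"
  assumes mono: "mono_on {c<..} g" and onto: "g ` {c<..} = {a<..<b}"
  shows "(g \<longlongrightarrow> a) (at_right c)"
proof (rule order_tendstoI)
  have bounds: "a < g t" "g t < b" if "c < t" for t
    using that onto by auto
  {
    fix y assume "y < a"
    show "eventually (\<lambda>t. y < g t) (at_right c)"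
      using eventually_at_right_less[of c]
      by eventually_elim (use bounds(1) \<open>y < a\<close> in \<open>blast intro: less_trans\<close>)
  next
    fix y assume "a < y"
    define m where "m = (a + min y b) / 2"
    have m: "m \<in> {a<..<b}" "m < y"
      using \<open>a < y\<close> bounds[of "c + 1"] unfolding m_def by auto
    obtain t0 where t0: "c < t0" "g t0 = m"
      using m(1) onto by (metis greaterThan_iff imageE)
    have "g t < y" if "c < t" "t < t0" for t
      using t0 mono_onD[OF mono, of t t0] that m(2) by auto
    then show "eventually (\<lambda>t. g t < y) (at_right c)"
      unfolding eventually_at_right_field using t0(1) by blast
  }
qed

lemma powr_half_odd:
  fixes y :: real
  assumes "0 \<le> y"
  shows "y powr (n + 1/2) = y ^ n * sqrt y"
  using assms by (cases "y = 0") (simp_all add: powr_add powr_realpow powr_half_sqrt)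

subsection \<open>The level curve and the time integrand\<close>

lemma less_root_3_2_iff: "0 \<le> x \<Longrightarrow> x < root 3 2 \<longleftrightarrow> x^3 < (2::real)"
  by (metis real_root_less_iff real_root_power_cancel zero_less_numeral)

lemma root_3_2_bounds: "1 < root 3 (2::real)" "root 3 (2::real) < 2"
proof -
  have "root 3 (2::real) < root 3 (2^3)"
    by (simp only: real_root_less_iff) simp
  then show "root 3 (2::real) < 2"
    by (simp only: real_root_power_cancel zero_less_numeral zero_le_numeral)
  show "1 < root 3 (2::real)"
    using less_root_3_2_iff[of 1] by simp
qed

definition curve :: "real \<Rightarrow> real" where
  "curve x = 1 / sqrt (x * (2 - x^3))"

text \<open>The integrand of \<open>t_min\<close>, written with \<open>sqrt\<close> rather than \<open>powr\<close> so that its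
  continuity at \<open>0\<close> is a matter of \<open>continuous_intros\<close>.\<close>

definition phi :: "real \<Rightarrow> real" where
  "phi x = x * sqrt x / ((2 - x^3)^2 * sqrt (2 - x^3))"

lemma phi_eq_powr:
  assumes "0 \<le> x" "x^3 < 2"
  shows "x powr (3/2) / (2 - x^3) powr (5/2) = phi x"
proof -
  have "x powr (3/2) = x ^ 1 * sqrt x"
    using powr_half_odd[of x 1] assms(1) by simp
  moreover have "(2 - x^3) powr (5/2) = (2 - x^3)^2 * sqrt (2 - x^3)"
    using powr_half_odd[of "2 - x^3" 2] assms(2) by simp
  ultimately show ?thesis
    unfolding phi_def by simp
qed

lemma t_min_eq: "t_min = - (3/2) * integral {0..1} phi"
proof -
  have "integral {0..1} (\<lambda>x::real. x powr (3/2) / (2 - x^3) powr (5/2)) = integral {0..1} phi"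
  proof (rule integral_cong)
    fix x :: real assume "x \<in> {0..1}"
    then show "x powr (3/2) / (2 - x^3) powr (5/2) = phi x"
      using power_le_one[of x 3] by (intro phi_eq_powr) auto
  qed
  then show ?thesis
    unfolding t_min_def by simp
qed

lemma phi_pos: "0 < x \<Longrightarrow> x^3 < 2 \<Longrightarrow> 0 < phi x"
  unfolding phi_def by simp

lemma continuous_on_phi:
  assumes "b < root 3 2"
  shows "continuous_on {0..b} phi"
proof -
  have "\<forall>x\<in>{0..b}. 0 < 2 - x^3"
  proof
    fix x assume "x \<in> {0..b}"
    then show "0 < 2 - x^3"
      using assms less_root_3_2_iff[of x] by auto
  qed
  then show ?thesis
    unfolding phi_def by (intro continuous_intros) auto
qed

lemma Fu_curve:
  assumes "0 < x" "x^3 < 2"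
  shows "Fu x (curve x) * phi x = 2/3"
proof -
  define s where "s = sqrt x"
  define r where "r = sqrt (2 - x^3)"
  have s: "0 < s" "x = s^2" and r: "0 < r" "2 - x^3 = r^2"
    and sqrts: "sqrt x = s" "sqrt (2 - x^3) = r"
    using assms by (auto simp: s_def r_def)
  have "Fu x (curve x) * phi x = (2/3) * r^2 / (x^3 * (1/(s*r))^3) * (x * s / ((r^2)^2 * r))"
    unfolding Fu_def phi_def curve_def real_sqrt_mult sqrts unfolding r(2) ..
  also have "\<dots> = (2/3) * r^2 / ((s^2)^3 * (1/(s*r))^3) * (s^2 * s / ((r^2)^2 * r))"
    by (simp only: s(2))
  also have "\<dots> = 2/3"
    using s(1) r(1) by (simp add: field_simps) algebra
  finally show ?thesis .
qed

lemma curve_deriv: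
  assumes "0 < x" "x^3 < 2"
  shows "(curve has_real_derivative - (1 - 2*x^3) * curve x ^ 3) (at x)"
proof -
  define w where "w = x * (2 - x^3)"
  have w: "0 < w" "sqrt w ^ 2 = w" using assms by (auto simp: w_def)
  have "((\<lambda>x. x * (2 - x^3)) has_real_derivative 2 - 4 * x^3) (at x)"
    by (auto intro!: derivative_eq_intros simp: algebra_simps eval_nat_numeral)
  from DERIV_inverse_sqrt[OF this] w(1)
  have "(curve has_real_derivative - (2 - 4 * x^3) / (2 * w * sqrt w)) (at x)"
    unfolding curve_def w_def by simp
  moreover have "- (2 - 4 * x^3) / (2 * w * sqrt w) = - (1 - 2*x^3) * curve x ^ 3"
    using w unfolding curve_def w_def[symmetric] by (simp add: field_simps power3_eq_cube power2_eq_square)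
  ultimately show ?thesis by simp
qed

lemma Fv_curve:
  assumes "0 < x" "x^3 < 2"
  shows "Fv x (curve x) = - (1 - 2*x^3) * curve x ^ 3 * Fu x (curve x)"
proof -
  define s where "s = sqrt x"
  define r where "r = sqrt (2 - x^3)"
  have s: "0 < s" "s^2 = x" and r: "0 < r" "2 - x^3 = r^2"
    and sqrts: "sqrt x = s" "sqrt (2 - x^3) = r"
    using assms by (auto simp: s_def r_def)
  have c2: "(1/(s*r))^2 = 1 / (x * r^2)"
    using s(2) by (simp add: power_mult_distrib power_one_over)
  have "Fv x (curve x) = - (2/3) * (1 - 2*x^3) / (x^4 * (1/(s*r))^2)"
    unfolding Fv_def curve_def real_sqrt_mult sqrts ..
  also have "\<dots> = - (2/3) * (1 - 2*x^3) * r^2 / x^3"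
    unfolding c2 using assms(1) r(1) by (simp add: field_simps eval_nat_numeral)
  also have "\<dots> = - (1 - 2*x^3) * (1/(s*r))^3 * ((2/3) * r^2 / (x^3 * (1/(s*r))^3))"
    using assms(1) s(1) r(1) by (simp add: field_simps)
  also have "\<dots> = - (1 - 2*x^3) * curve x ^ 3 * Fu x (curve x)"
    unfolding Fu_def curve_def real_sqrt_mult sqrts unfolding r(2) ..
  finally show ?thesis .
qed

lemma filterlim_curve_at_top:
  fixes f :: "'a \<Rightarrow> real"
  assumes "(f \<longlongrightarrow> x) F" "x * (2 - x^3) = 0" "eventually (\<lambda>t. 0 < f t \<and> f t ^ 3 < 2) F"
  shows "filterlim (\<lambda>t. curve (f t)) at_top F"
  unfolding curve_def
proof (rule filterlim_inverse_sqrt_at_top)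
  have "((\<lambda>t. f t * (2 - f t ^ 3)) \<longlongrightarrow> x * (2 - x^3)) F"
    using assms(1) by (intro tendsto_intros)
  then show "((\<lambda>t. f t * (2 - f t ^ 3)) \<longlongrightarrow> 0) F"
    using assms(2) by simp
  show "eventually (\<lambda>t. 0 < f t * (2 - f t ^ 3)) F"
    using assms(3) by eventually_elim simp
qed

subsection \<open>The time needed to reach a given value of \<open>u\<close>\<close>

definition arrival_time :: "real \<Rightarrow> real" where
  "arrival_time x = t_min + 3/2 * integral {0..x} phi"

lemma arrival_time_0: "arrival_time 0 = t_min"
  unfolding arrival_time_def by simp

lemma arrival_time_1: "arrival_time 1 = 0"
  unfolding arrival_time_def t_min_eq by simp

lemma continuous_on_arrival_time:
  assumes "b < root 3 2"
  shows "continuous_on {0..b} arrival_time"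
proof -
  have "continuous_on {0..b} (\<lambda>x. integral {0..x} phi)"
    by (rule indefinite_integral_continuous_1[OF integrable_continuous_real[OF continuous_on_phi[OF assms]]])
  then show ?thesis
    unfolding arrival_time_def by (intro continuous_intros)
qed

lemma arrival_time_deriv:
  assumes "0 < x" "x < root 3 2"
  shows "(arrival_time has_real_derivative 3/2 * phi x) (at x)"
proof -
  define b where "b = (x + root 3 2) / 2"
  have b: "x < b" "b < root 3 2"
    using assms by (auto simp: b_def)
  have "((\<lambda>x. integral {0..x} phi) has_real_derivative phi x) (at x within {0..b})"
    using assms b by (intro integral_has_real_derivative continuous_on_phi) auto
  moreover have "at x within {0..b} = at x"
    using assms b by (intro at_within_interior) auto
  ultimately show ?thesis
    unfolding arrival_time_def by (auto intro!: derivative_eq_intros)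
qed

lemma strict_mono_on_arrival_time: "strict_mono_on {0..<root 3 2} arrival_time"
proof (rule strict_mono_onI)
  fix a b assume ab: "a \<in> {0..<root 3 2}" "b \<in> {0..<root 3 2}" "a < b"
  show "arrival_time a < arrival_time b"
  proof (rule DERIV_pos_imp_increasing_open[OF \<open>a < b\<close>])
    fix x assume "a < x" "x < b"
    then have "0 < x" "x < root 3 2" "x^3 < 2"
      using ab less_root_3_2_iff[of x] by auto
    then show "\<exists>y. (arrival_time has_real_derivative y) (at x) \<and> 0 < y"
      using arrival_time_deriv phi_pos by (intro exI[of _ "3/2 * phi x"]) auto
  next
    show "continuous_on {a..b} arrival_time"
      by (rule continuous_on_subset[OF continuous_on_arrival_time[of b]]) (use ab in auto)
  qed
qed

text \<open>The derivative of \<open>blowup\<close> is bounded by \<open>(3/2) phi\<close>, so \<open>blowup\<close> tending to infinity at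
  \<open>root 3 2\<close> forces the integral defining \<open>arrival_time\<close> to diverge there.\<close>

definition blowup :: "real \<Rightarrow> real" where
  "blowup x = 1 / sqrt (36 * (2 - x^3)^3)"

lemma blowup_deriv:
  assumes "x^3 < 2"
  shows "(blowup has_real_derivative 3/4 * x^2 / ((2 - x^3)^2 * sqrt (2 - x^3))) (at x)"
proof -
  define q where "q = 2 - x^3"
  have q: "0 < q" using assms by (simp add: q_def)
  have "((\<lambda>x. 36 * (2 - x^3)^3) has_real_derivative - 324 * x^2 * q^2) (at x)"
    unfolding q_def by (auto intro!: derivative_eq_intros)
  from DERIV_inverse_sqrt[OF this] q
  have "(blowup has_real_derivative 324 * x^2 * q^2 / (72 * q^3 * sqrt (36 * q^3))) (at x)"
    unfolding blowup_def q_def by simp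
  moreover have "sqrt (36 * q^3) = 6 * q * sqrt q"
    using q by (simp add: real_sqrt_mult power3_eq_cube)
  ultimately show ?thesis
    using q unfolding q_def[symmetric] by (simp add: field_simps power3_eq_cube power2_eq_square)
qed

lemma blowup_deriv_le_phi:
  assumes "0 < x" "0 < 2 - x^3"
  shows "3/4 * x^2 / ((2 - x^3)^2 * sqrt (2 - x^3)) \<le> 3/2 * phi x"
proof -
  have "x < 2"
    using assms less_root_3_2_iff[of x] root_3_2_bounds by auto
  then have "(x / 2)^2 \<le> x"
    using assms(1) by (simp add: power2_eq_square field_simps)
  then have "x * (x / 2) \<le> x * sqrt x"
    using assms(1) by (intro mult_left_mono real_le_rsqrt) auto
  then have "3/4 * x^2 / ((2 - x^3)^2 * sqrt (2 - x^3))
      \<le> 3/2 * (x * sqrt x) / ((2 - x^3)^2 * sqrt (2 - x^3))"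
    using assms(2) by (intro divide_right_mono) (auto simp: power2_eq_square)
  then show ?thesis
    unfolding phi_def by simp
qed

lemma arrival_time_ge_blowup:
  assumes "0 \<le> b" "b < root 3 2"
  shows "t_min - blowup 0 + blowup b \<le> arrival_time b"
proof -
  have cubes: "0 < 2 - x^3" if "0 \<le> x" "x \<le> b" for x
    using that assms less_root_3_2_iff[of x] by auto
  have "arrival_time 0 - blowup 0 \<le> arrival_time b - blowup b"
  proof (rule DERIV_nonneg_imp_increasing_open[OF assms(1)])
    fix x assume x: "0 < x" "x < b"
    then have "x < root 3 2" "0 < 2 - x^3"
      using cubes[of x] assms by auto
    have "3/4 * x^2 / ((2 - x^3)^2 * sqrt (2 - x^3)) \<le> 3/2 * phi x"
      using x(1) \<open>0 < 2 - x^3\<close> by (rule blowup_deriv_le_phi)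
    moreover have "((\<lambda>x. arrival_time x - blowup x) has_real_derivative
        3/2 * phi x - 3/4 * x^2 / ((2 - x^3)^2 * sqrt (2 - x^3))) (at x)"
      using arrival_time_deriv[OF x(1) \<open>x < root 3 2\<close>] blowup_deriv \<open>0 < 2 - x^3\<close>
      by (intro DERIV_diff) auto
    ultimately show "\<exists>y. ((\<lambda>x. arrival_time x - blowup x) has_real_derivative y) (at x) \<and> 0 \<le> y"
      by (metis diff_ge_0_iff_ge)
  next
    have "continuous_on {0..b} blowup"
    proof -
      have "\<forall>x\<in>{0..b}. 0 < 2 - x^3"
        using cubes by auto
      then show ?thesis
        unfolding blowup_def by (intro continuous_intros) auto
    qed
    then show "continuous_on {0..b} (\<lambda>x. arrival_time x - blowup x)"
      using continuous_on_arrival_time[OF assms(2)] by (intro continuous_intros)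
  qed
  then show ?thesis
    using arrival_time_0 by simp
qed

lemma eventually_at_left_root_3_2: "eventually (\<lambda>x. 0 < x \<and> x^3 < 2) (at_left (root 3 (2::real)))"
proof -
  have "eventually (\<lambda>x. x \<in> {0<..<root 3 2}) (at_left (root 3 (2::real)))"
    using root_3_2_bounds by (intro eventually_at_left_real) auto
  then show ?thesis
    by eventually_elim (auto simp: less_root_3_2_iff[symmetric])
qed

lemma blowup_tendsto_at_top: "filterlim blowup at_top (at_left (root 3 2))"
  unfolding blowup_def
proof (rule filterlim_inverse_sqrt_at_top)
  have "((\<lambda>x. 36 * (2 - x^3)^3) \<longlongrightarrow> 36 * (2 - root 3 2 ^ 3)^3) (at_left (root 3 (2::real)))"
    by (intro tendsto_intros)
  then show "((\<lambda>x. 36 * (2 - x^3)^3) \<longlongrightarrow> 0) (at_left (root 3 (2::real)))"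
    by (simp add: real_root_pow_pos2)
  show "eventually (\<lambda>x. 0 < 36 * (2 - x^3)^3) (at_left (root 3 (2::real)))"
    using eventually_at_left_root_3_2 by eventually_elim simp
qed

lemma arrival_time_tendsto_at_top: "filterlim arrival_time at_top (at_left (root 3 2))"
proof (rule filterlim_at_top_mono)
  show "filterlim (\<lambda>x. (t_min - blowup 0) + blowup x) at_top (at_left (root 3 2))"
    by (rule filterlim_tendsto_add_at_top[OF tendsto_const blowup_tendsto_at_top])
  show "eventually (\<lambda>x. t_min - blowup 0 + blowup x \<le> arrival_time x) (at_left (root 3 2))"
    using eventually_at_left_root_3_2
    by eventually_elim (auto intro: arrival_time_ge_blowup simp: less_root_3_2_iff)
qed

lemma bij_betw_arrival_time: "bij_betw arrival_time {0<..<root 3 2} {t_min<..}"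
proof (rule bij_betw_imageI)
  show "inj_on arrival_time {0<..<root 3 2}"
    using strict_mono_on_arrival_time
    by (rule strict_mono_on_imp_inj_on[THEN inj_on_subset]) auto
  show "arrival_time ` {0<..<root 3 2} = {t_min<..}"
  proof (intro equalityI subsetI)
    fix t assume "t \<in> arrival_time ` {0<..<root 3 2}"
    then obtain x where "0 < x" "x < root 3 2" "t = arrival_time x"
      by auto
    then show "t \<in> {t_min<..}"
      using strict_mono_onD[OF strict_mono_on_arrival_time, of 0 x] arrival_time_0 by auto
  next
    fix t assume "t \<in> {t_min<..}"
    have "eventually (\<lambda>x. t < arrival_time x \<and> 0 < x \<and> x^3 < 2) (at_left (root 3 2))"
      using filterlim_at_top_dense[THEN iffD1, OF arrival_time_tendsto_at_top] eventually_at_left_root_3_2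
      by (auto intro: eventually_conj)
    then obtain b where b: "t < arrival_time b" "0 < b" "b^3 < 2"
      using eventually_happens'[OF trivial_limit_at_left_real] by blast
    then have "b < root 3 2"
      using less_root_3_2_iff by auto
    obtain x where x: "0 \<le> x" "x \<le> b" "arrival_time x = t"
      using IVT'[of arrival_time 0 t b] b \<open>t \<in> {t_min<..}\<close> arrival_time_0 continuous_on_arrival_time[OF \<open>b < root 3 2\<close>]
      by auto
    moreover have "x \<noteq> 0"
      using x \<open>t \<in> {t_min<..}\<close> arrival_time_0 by auto
    ultimately show "t \<in> arrival_time ` {0<..<root 3 2}"
      using \<open>b < root 3 2\<close> by force
  qed
qed

subsection \<open>The maximal solution\<close>

definition sol_u :: "real \<Rightarrow> real" where
  "sol_u = the_inv_into {0<..<root 3 2} arrival_time"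

definition sol_v :: "real \<Rightarrow> real" where
  "sol_v t = curve (sol_u t)"

lemma sol_u_mem: "t_min < t \<Longrightarrow> sol_u t \<in> {0<..<root 3 2}"
  using bij_betw_the_inv_into[OF bij_betw_arrival_time]
  unfolding sol_u_def bij_betw_def by auto

lemma arrival_time_sol_u: "t_min < t \<Longrightarrow> arrival_time (sol_u t) = t"
  using f_the_inv_into_f_bij_betw[OF bij_betw_arrival_time] unfolding sol_u_def by simp

lemma sol_u_arrival_time: "x \<in> {0<..<root 3 2} \<Longrightarrow> sol_u (arrival_time x) = x"
  using bij_betw_arrival_time unfolding sol_u_def bij_betw_def by (simp add: the_inv_into_f_f)

lemma sol_u_domain: "t_min < t \<Longrightarrow> 0 < sol_u t \<and> sol_u t ^ 3 < 2"
  using sol_u_mem[of t] less_root_3_2_iff[of "sol_u t"] by auto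

lemma sol_u_deriv:
  assumes "t_min < t"
  shows "(sol_u has_real_derivative Fu (sol_u t) (sol_v t)) (at t)"
proof -
  define x where "x = sol_u t"
  have x: "x \<in> {0<..<root 3 2}" "0 < x" "x^3 < 2"
    using sol_u_mem[OF assms] sol_u_domain[OF assms] by (auto simp: x_def)
  have "(sol_u has_real_derivative inverse (3/2 * phi x)) (at (arrival_time x))"
  proof (rule DERIV_inverse_on_open[where S = "{0<..<root 3 2}" and f' = "\<lambda>y. 3/2 * phi y"])
    show "(arrival_time has_real_derivative 3/2 * phi y) (at y)" if "y \<in> {0<..<root 3 2}" for y
      using that arrival_time_deriv[of y] by simp
  qed (use x phi_pos[OF x(2,3)] sol_u_arrival_time in auto)
  moreover have "inverse (3/2 * phi x) = Fu x (curve x)"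
    using Fu_curve[OF x(2,3)] phi_pos[OF x(2,3)] by (simp add: field_simps)
  ultimately show ?thesis
    using arrival_time_sol_u[OF assms] unfolding sol_v_def x_def by simp
qed

lemma sol_v_deriv:
  assumes "t_min < t"
  shows "(sol_v has_real_derivative Fv (sol_u t) (sol_v t)) (at t)"
proof -
  have x: "0 < sol_u t" "sol_u t ^ 3 < 2"
    using sol_u_domain[OF assms] by auto
  from DERIV_chain2[OF curve_deriv[OF x] sol_u_deriv[OF assms]]
  show ?thesis
    unfolding sol_v_def Fv_curve[OF x] by (simp add: sol_v_def)
qed

lemma t_min_neg: "t_min < 0"
  using strict_mono_onD[OF strict_mono_on_arrival_time, of 0 1] root_3_2_bounds
  by (simp add: arrival_time_0 arrival_time_1)

lemma is_solution_sol: "is_solution {t_min<..} sol_u sol_v"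
  unfolding is_solution_def
proof (intro conjI ballI)
  show "open {t_min<..}" "is_interval {t_min<..}" "0 \<in> {t_min<..}"
    using t_min_neg by auto
  show "sol_u 0 = 1"
    using sol_u_arrival_time[of 1] root_3_2_bounds by (simp add: arrival_time_1)
  then show "sol_v 0 = 1"
    by (simp add: sol_v_def curve_def)
  fix t assume "t \<in> {t_min<..}"
  then show "(sol_u t, sol_v t) \<in> Omega"
    using sol_u_mem[of t] sol_u_domain[of t] by (auto simp: Omega_def sol_v_def curve_def)
  show "(sol_u has_real_derivative Fu (sol_u t) (sol_v t)) (at t)"
    using \<open>t \<in> {t_min<..}\<close> by (simp add: sol_u_deriv)
  show "(sol_v has_real_derivative Fv (sol_u t) (sol_v t)) (at t)"
    using \<open>t \<in> {t_min<..}\<close> by (simp add: sol_v_deriv)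
qed

lemma is_solutionD:
  assumes "is_solution J u v" "t \<in> J"
  shows "0 < u t" "u t ^ 3 < 2" "0 < v t"
    and "(u has_real_derivative Fu (u t) (v t)) (at t)"
    and "(v has_real_derivative Fv (u t) (v t)) (at t)"
  using assms less_root_3_2_iff[of "u t"] unfolding is_solution_def Omega_def by auto

lemma first_integral_deriv:
  assumes "(u has_real_derivative Fu (u t) (v t)) (at t)"
    and "(v has_real_derivative Fv (u t) (v t)) (at t)"
    and "0 < u t" "0 < v t"
  shows "((\<lambda>t. v t ^ 2 * (u t * (2 - u t ^ 3))) has_real_derivative 0) (at t)"
proof -
  have "((\<lambda>t. v t ^ 2 * (u t * (2 - u t ^ 3))) has_real_derivative
      2 * v t * Fv (u t) (v t) * (u t * (2 - u t ^ 3))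
      + v t ^ 2 * (Fu (u t) (v t) * (2 - u t ^ 3) - u t * (3 * u t ^ 2 * Fu (u t) (v t)))) (at t)"
    using assms by (auto intro!: derivative_eq_intros simp: algebra_simps eval_nat_numeral)
  moreover have "2 * v t * Fv (u t) (v t) * (u t * (2 - u t ^ 3))
      + v t ^ 2 * (Fu (u t) (v t) * (2 - u t ^ 3) - u t * (3 * u t ^ 2 * Fu (u t) (v t))) = 0"
    using assms(3,4) unfolding Fu_def Fv_def by (simp add: field_simps) algebra
  ultimately show ?thesis by simp
qed

lemma solution_on_curve:
  assumes "is_solution J u v" "t \<in> J"
  shows "v t = curve (u t)"
proof -
  have J: "is_interval J" "0 \<in> J" "u 0 = 1" "v 0 = 1"
    using assms(1) unfolding is_solution_def by auto
  have "v t ^ 2 * (u t * (2 - u t ^ 3)) = v 0 ^ 2 * (u 0 * (2 - u 0 ^ 3))"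
    using is_solutionD[OF assms(1)]
    by (intro DERIV_zero_imp_constant_on_interval[OF J(1) _ J(2) assms(2)] first_integral_deriv)
  then have "v t ^ 2 = 1 / (u t * (2 - u t ^ 3))"
    using J(3,4) is_solutionD[OF assms] by (simp add: field_simps)
  then show ?thesis
    unfolding curve_def using is_solutionD(3)[OF assms]
    by (metis real_sqrt_divide real_sqrt_one real_sqrt_unique less_imp_le)
qed

lemma solution_arrival_time:
  assumes "is_solution J u v" "t \<in> J"
  shows "arrival_time (u t) = t"
proof -
  have J: "is_interval J" "0 \<in> J" "u 0 = 1"
    using assms(1) unfolding is_solution_def by auto
  have "((\<lambda>t. arrival_time (u t) - t) has_real_derivative 0) (at s)" if "s \<in> J" for s
  proof -
    note sol = is_solutionD[OF assms(1) that]
    have "u s < root 3 2"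
      using sol less_root_3_2_iff by auto
    have "3/2 * phi (u s) * Fu (u s) (v s) = 1"
      using Fu_curve[OF sol(1,2)] solution_on_curve[OF assms(1) that] by (simp add: algebra_simps)
    with DERIV_chain2[OF arrival_time_deriv[OF sol(1) \<open>u s < root 3 2\<close>] sol(4)]
    show ?thesis
      by (auto intro!: derivative_eq_intros)
  qed
  then have "arrival_time (u t) - t = arrival_time (u 0) - 0"
    by (rule DERIV_zero_imp_constant_on_interval[OF J(1) _ J(2) assms(2)])
  then show ?thesis
    using J(3) arrival_time_1 by simp
qed

lemma solution_eq_sol:
  assumes "is_solution J u v" "t \<in> J"
  shows "t_min < t" "u t = sol_u t" "v t = sol_v t"
proof -
  note sol = is_solutionD[OF assms]
  have "u t \<in> {0<..<root 3 2}"
    using sol less_root_3_2_iff by auto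
  then show "t_min < t" "u t = sol_u t"
    using solution_arrival_time[OF assms] bij_betw_arrival_time sol_u_arrival_time
    unfolding bij_betw_def by force+
  then show "v t = sol_v t"
    using solution_on_curve[OF assms] by (simp add: sol_v_def)
qed

lemma is_maximal_solution_sol: "is_maximal_solution {t_min<..} sol_u sol_v"
  unfolding is_maximal_solution_def
  using is_solution_sol solution_eq_sol(1) by blast

lemma maximal_solution_eq_sol:
  assumes "is_maximal_solution I u v"
  shows "I = {t_min<..}" "\<And>t. t_min < t \<Longrightarrow> u t = sol_u t \<and> v t = sol_v t"
proof -
  have sol: "is_solution I u v"
    using assms by (simp add: is_maximal_solution_def)
  then show I: "I = {t_min<..}"
    using assms is_solution_sol solution_eq_sol unfolding is_maximal_solution_def
    by (metis subsetI greaterThan_iff)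
  show "u t = sol_u t \<and> v t = sol_v t" if "t_min < t" for t
    using solution_eq_sol[OF sol] that unfolding I by simp
qed

lemma sol_u_image: "sol_u ` {t_min<..} = {0<..<root 3 2}"
  using bij_betw_the_inv_into[OF bij_betw_arrival_time]
  unfolding sol_u_def bij_betw_def by simp

lemma sol_image:
  "(\<lambda>t. (sol_u t, sol_v t)) ` {t_min<..} = {(x, 1 / sqrt (x * (2 - x^3))) | x. 0 < x \<and> x < root 3 2}"
proof -
  have "(\<lambda>t. (sol_u t, sol_v t)) ` {t_min<..} = (\<lambda>x. (x, curve x)) ` (sol_u ` {t_min<..})"
    unfolding image_image sol_v_def ..
  then show ?thesis
    unfolding sol_u_image curve_def by auto
qed

lemma mono_on_sol_u: "mono_on {t_min<..} sol_u"
proof (rule mono_onI)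
  fix s t assume st: "s \<in> {t_min<..}" "t \<in> {t_min<..}" "s \<le> t"
  show "sol_u s \<le> sol_u t"
  proof (rule ccontr)
    assume "\<not> sol_u s \<le> sol_u t"
    moreover have "sol_u s \<in> {0<..<root 3 2}" "sol_u t \<in> {0<..<root 3 2}"
      using st sol_u_mem by auto
    ultimately have "arrival_time (sol_u t) < arrival_time (sol_u s)"
      by (intro strict_mono_onD[OF strict_mono_on_arrival_time]) auto
    then show False
      using st arrival_time_sol_u by simp
  qed
qed

lemma sol_u_tendsto:
  "(sol_u \<longlongrightarrow> root 3 2) at_top" "(sol_u \<longlongrightarrow> 0) (at_right t_min)"
  using mono_on_onto_interval_tendsto_at_top[OF mono_on_sol_u sol_u_image]
    mono_on_onto_interval_tendsto_at_right[OF mono_on_sol_u sol_u_image] .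

lemma sol_v_tendsto:
  "filterlim sol_v at_top at_top" "filterlim sol_v at_top (at_right t_min)"
proof -
  have "eventually (\<lambda>t. 0 < sol_u t \<and> sol_u t ^ 3 < 2) F"
    if "eventually (\<lambda>t. t_min < t) F" for F
    using that by eventually_elim (rule sol_u_domain)
  then show "filterlim sol_v at_top at_top" "filterlim sol_v at_top (at_right t_min)"
    unfolding sol_v_def
    using sol_u_tendsto eventually_gt_at_top[of t_min] eventually_at_right_less[of t_min]
    by (auto intro!: filterlim_curve_at_top simp: real_root_pow_pos2)
qed

theorem corollary4p6:
  shows "(\<exists>I u v. is_maximal_solution I u v) \<and>
    (\<forall>I u v. is_maximal_solution I u v \<longrightarrow>
       (\<lambda>t. (u t, v t)) ` I = {(x, 1 / sqrt (x * (2 - x^3))) | x. 0 < x \<and> x < root 3 2} \<and>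
       I = {t_min<..} \<and>
       (u \<longlongrightarrow> 0) (at_right t_min) \<and>
       filterlim v at_top (at_right t_min) \<and>
       (u \<longlongrightarrow> root 3 2) at_top \<and>
       filterlim v at_top at_top)"
proof (intro conjI allI impI)
  show "\<exists>I u v. is_maximal_solution I u v"
    using is_maximal_solution_sol by blast
  fix I u v assume max: "is_maximal_solution I u v"
  show I: "I = {t_min<..}"
    by (rule maximal_solution_eq_sol(1)[OF max])
  show "(\<lambda>t. (u t, v t)) ` I = {(x, 1 / sqrt (x * (2 - x^3))) | x. 0 < x \<and> x < root 3 2}"
    unfolding I sol_image[symmetric] using maximal_solution_eq_sol(2)[OF max]
    by (intro image_cong) auto
  have agree: "eventually (\<lambda>t. u t = sol_u t) F" "eventually (\<lambda>t. v t = sol_v t) F"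
    if "eventually (\<lambda>t. t_min < t) F" for F :: "real filter"
    using that by (auto elim: eventually_mono dest: maximal_solution_eq_sol(2)[OF max])
  show "(u \<longlongrightarrow> 0) (at_right t_min)" "(u \<longlongrightarrow> root 3 2) at_top"
    using agree(1)[OF eventually_at_right_less] agree(1)[OF eventually_gt_at_top] sol_u_tendsto
    by (auto simp: tendsto_cong)
  show "filterlim v at_top (at_right t_min)" "filterlim v at_top at_top"
    using agree(2)[OF eventually_at_right_less] agree(2)[OF eventually_gt_at_top] sol_v_tendsto
    by (auto simp: filterlim_cong)
qed

end
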